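(* Let $\mathcal A=(A,\delta^A,\sigma^A,\tau^A)$ and $\mathcal B=(B,\delta^B,\sigma^B,\tau^B)$ be fuzzy automata over $\mathcal L$ and $X$, let $w\in\{fs,bs,fb,bb,fbb,bfb\}$, and define $\{\varphi_k\}_{k\in\mathbb N}\subseteq\mathcal R(A,B)$ by $$\varphi_1=\psi^w,\qquad \varphi_{k+1}=\varphi_k\wedge\phi^w(\varphi_k)\quad(k\in\mathbb N).$$ Suppose the subalgebra $\big\langle \operatorname{im}(\psi^w)\cup\bigcup_{x\in X}(\operatorname{im}(\delta^A_x)\cup\operatorname{im}(\delta^B_x))\big\rangle$ of $\mathcal L$ is finite. Then: (a) the sequence $\{\varphi_k\}$ is finite (takes only finitely many values) and descending, and there is a least $k\in\mathbb N$ with $\varphi_k=\varphi_{k+1}$; (b) for this $k$, $\varphi_k$ is the greatest fuzzy relation in $\mathcal R(A,B)$ satisfying $(w\text{-}2)$ and $(w\text{-}3)$; (c) if $\varphi_k$ satisfies $(w\text{-}1)$, then it is the greatest fuzzy relation in $\mathcal R(A,B)$ satisfying $(w\text{-}1)$, $(w\text{-}2)$ and $(w\text{-}3)$; (d) if $\varphi_k$ does not satisfy $(w\text{-}1)$, then no fuzzy relation in $\mathcal R(A,B)$ satisfies $(w\text{-}1)$, $(w\text{-}2)$ and $(w\text{-}3)$.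
   Context: Let $\mathcal L=(L,\wedge,\vee,\otimes,\to,0,1)$ be a complete residuated lattice: $(L,\wedge,\vee,0,1)$ is a complete lattice with least element $0$ and greatest element $1$, $(L,\otimes,1)$ is a commutative monoid, and $x\otimes y\le z\iff x\le y\to z$. For nonempty sets $A,B$, $\mathcal R(A,B)$ denotes the set of fuzzy relations $A\times B\to L$, ordered pointwise, with pointwise meets $\wedge$ and joins; $L^A$ denotes functions $A\to L$. $\operatorname{im}(\varphi)$ is the set of values of $\varphi$; for $S\subseteq L$, $\langle S\rangle$ is the subalgebra of $\mathcal L$ (w.r.t. $\wedge,\vee,\otimes,\to,0,1$) generated by $S$. Converse: $\varphi^{-1}(b,a)=\varphi(a,b)$. Compositions: $(\varphi\circ\psi)(a,c)=\bigvee_{b}\varphi(a,b)\otimes\psi(b,c)$; for $f\in L^A$, $g\in L^B$, $\varphi\in\mathcal R(A,B)$: $(f\circ\varphi)(b)=\bigvee_{a}f(a)\otimes\varphi(a,b)$, $(\varphi\circ g)(a)=\bigvee_{b}\varphi(a,b)\otimes g(b)$. For $\eta\in L^A,\xi\in L^B$: $(\eta\to\xi)(a,b)=\eta(a)\to\xi(b)$, $(\eta\leftarrow\xi)(a,b)=\xi(b)\to\eta(a)$, $\eta\leftrightarrow\xi=(\eta\to\xi)\wedge(\eta\leftarrow\xi)$. $X$ is a finite nonempty alphabet. A fuzzy automaton $\mathcal A=(A,\delta^A,\sigma^A,\tau^A)$: finite nonempty state set $A$, $\delta^A:A\times X\times A\to L$, $\sigma^A,\tau^A\in L^A$; $\delta^A_x(a,a')=\delta^A(a,x,a')$.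 Similarly for $\mathcal B$. Conditions on $\varphi\in\mathcal R(A,B)$ (those with $x$ required for all $x\in X$): - $fs$: (1) $\sigma^A\le\sigma^B\circ\varphi^{-1}$; (2) $\varphi^{-1}\circ\delta^A_x\le\delta^B_x\circ\varphi^{-1}$; (3) $\varphi^{-1}\circ\tau^A\le\tau^B$. - $bs$: (1) $\tau^A\le\varphi\circ\tau^B$; (2) $\delta^A_x\circ\varphi\le\varphi\circ\delta^B_x$; (3) $\sigma^A\circ\varphi\le\sigma^B$. - $fb$: (1) $\sigma^A\le\sigma^B\circ\varphi^{-1}$, $\sigma^B\le\sigma^A\circ\varphi$; (2) $\varphi^{-1}\circ\delta^A_x\le\delta^B_x\circ\varphi^{-1}$, $\varphi\circ\delta^B_x\le\delta^A_x\circ\varphi$; (3) $\varphi^{-1}\circ\tau^A\le\tau^B$, $\varphi\circ\tau^B\le\tau^A$. - $bb$: (1) $\tau^A\le\varphi\circ\tau^B$, $\tau^B\le\varphi^{-1}\circ\tau^A$; (2) $\delta^A_x\circ\varphi\le\varphi\circ\delta^B_x$, $\delta^B_x\circ\varphi^{-1}\le\varphi^{-1}\circ\delta^A_x$; (3) $\sigma^A\circ\varphi\le\sigma^B$, $\sigma^B\circ\varphi^{-1}\le\sigma^A$. - $fbb$: (1) $\sigma^A\le\sigma^B\circ\varphi^{-1}$, $\tau^B\le\varphi^{-1}\circ\tau^A$; (2) $\varphi^{-1}\circ\delta^A_x=\delta^B_x\circ\varphi^{-1}$; (3) $\sigma^B\circ\varphi^{-1}\le\sigma^A$, $\varphi^{-1}\circ\tau^A\le\tau^B$.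 - $bfb$: (1) $\sigma^B\le\sigma^A\circ\varphi$, $\tau^A\le\varphi\circ\tau^B$; (2) $\delta^A_x\circ\varphi=\varphi\circ\delta^B_x$; (3) $\sigma^A\circ\varphi\le\sigma^B$, $\varphi\circ\tau^B\le\tau^A$. Here $(w\text{-}i)$ denotes condition $(i)$ of type $w$. $\psi^{fs}=\tau^A\to\tau^B$; $\psi^{bs}=\sigma^A\to\sigma^B$; $\psi^{fb}=\tau^A\leftrightarrow\tau^B$; $\psi^{bb}=\sigma^A\leftrightarrow\sigma^B$; $\psi^{fbb}=(\tau^A\to\tau^B)\wedge(\sigma^A\leftarrow\sigma^B)$; $\psi^{bfb}=(\sigma^A\to\sigma^B)\wedge(\tau^A\leftarrow\tau^B)$. For $\alpha\in\mathcal R(A,B)$: $F(\alpha)(a,b)=\bigwedge_{x\in X}\bigwedge_{a'\in A}\big[\delta^A_x(a,a')\to\bigvee_{b'\in B}\delta^B_x(b,b')\otimes\alpha(a',b')\big]$, $F'(\alpha)(a,b)=\bigwedge_{x\in X}\bigwedge_{b'\in B}\big[\delta^B_x(b,b')\to\bigvee_{a'\in A}\delta^A_x(a,a')\otimes\alpha(a',b')\big]$, $G(\alpha)(a,b)=\bigwedge_{x\in X}\bigwedge_{a'\in A}\big[\delta^A_x(a',a)\to\bigvee_{b'\in B}\alpha(a',b')\otimes\delta^B_x(b',b)\big]$, $G'(\alpha)(a,b)=\bigwedge_{x\in X}\bigwedge_{b'\in B}\big[\delta^B_x(b',b)\to\bigvee_{a'\in A}\delta^A_x(a',a)\otimes\alpha(a',b')\big]$;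 $\phi^{fs}=F$, $\phi^{bs}=G$, $\phi^{fb}=F\wedge F'$, $\phi^{bb}=G\wedge G'$, $\phi^{fbb}=F\wedge G'$, $\phi^{bfb}=G\wedge F'$. *)

theory Defs
  imports Main
begin

class complete_residuated_lattice = complete_lattice +
  fixes rmult :: "'a \<Rightarrow> 'a \<Rightarrow> 'a" (infixl "\<otimes>" 70)
    and rimp :: "'a \<Rightarrow> 'a \<Rightarrow> 'a" (infixr "\<leadsto>" 25)
  assumes rmult_assoc: "(x \<otimes> y) \<otimes> z = x \<otimes> (y \<otimes> z)"
    and rmult_commute: "x \<otimes> y = y \<otimes> x"
    and rmult_top: "x \<otimes> top = x"
    and residuation: "x \<otimes> y \<le> z \<longleftrightarrow> x \<le> (y \<leadsto> z)"

inductive_set subalg_gen :: "'l::complete_residuated_lattice set \<Rightarrow> 'l set" for S where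
  base: "s \<in> S \<Longrightarrow> s \<in> subalg_gen S"
| bot: "bot \<in> subalg_gen S"
| top: "top \<in> subalg_gen S"
| inf: "x \<in> subalg_gen S \<Longrightarrow> y \<in> subalg_gen S \<Longrightarrow> inf x y \<in> subalg_gen S"
| sup: "x \<in> subalg_gen S \<Longrightarrow> y \<in> subalg_gen S \<Longrightarrow> sup x y \<in> subalg_gen S"
| mult: "x \<in> subalg_gen S \<Longrightarrow> y \<in> subalg_gen S \<Longrightarrow> x \<otimes> y \<in> subalg_gen S"
| imp: "x \<in> subalg_gen S \<Longrightarrow> y \<in> subalg_gen S \<Longrightarrow> (x \<leadsto> y) \<in> subalg_gen S"

text \<open>States are the (finite, nonempty) types 's; the alphabet is the finite type 'x.
delta A a x a' = \<delta>^A(a,x,a').\<close>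

record ('s, 'x, 'l) fuzzy_automaton =
  delta :: "'s \<Rightarrow> 'x \<Rightarrow> 's \<Rightarrow> 'l"
  sigma :: "'s \<Rightarrow> 'l"
  tau :: "'s \<Rightarrow> 'l"

definition dx :: "('s, 'x, 'l, 'z) fuzzy_automaton_scheme \<Rightarrow> 'x \<Rightarrow> 's \<Rightarrow> 's \<Rightarrow> 'l" where
  "dx A x = (\<lambda>a a'. delta A a x a')"

definition cv :: "('a \<Rightarrow> 'b \<Rightarrow> 'l) \<Rightarrow> 'b \<Rightarrow> 'a \<Rightarrow> 'l" where
  "cv \<phi> = (\<lambda>b a. \<phi> a b)"

definition rc :: "('a \<Rightarrow> 'b \<Rightarrow> 'l::complete_residuated_lattice) \<Rightarrow> ('b \<Rightarrow> 'c \<Rightarrow> 'l) \<Rightarrow> 'a \<Rightarrow> 'c \<Rightarrow> 'l" where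
  "rc \<phi> \<psi> = (\<lambda>a c. SUP b. \<phi> a b \<otimes> \<psi> b c)"

definition vr :: "('a \<Rightarrow> 'l::complete_residuated_lattice) \<Rightarrow> ('a \<Rightarrow> 'b \<Rightarrow> 'l) \<Rightarrow> 'b \<Rightarrow> 'l" where
  "vr f \<phi> = (\<lambda>b. SUP a. f a \<otimes> \<phi> a b)"

definition rv :: "('a \<Rightarrow> 'b \<Rightarrow> 'l::complete_residuated_lattice) \<Rightarrow> ('b \<Rightarrow> 'l) \<Rightarrow> 'a \<Rightarrow> 'l" where
  "rv \<phi> g = (\<lambda>a. SUP b. \<phi> a b \<otimes> g b)"

datatype simtype = FS | BS | FB | BB | FBB | BFB

type_synonym ('a,'x,'l) fa = "('a,'x,'l) fuzzy_automaton"

fun cond1 :: "simtype \<Rightarrow> ('a,'x,'l) fa \<Rightarrow> ('b,'x,'l) fa \<Rightarrow> ('a \<Rightarrow> 'b \<Rightarrow> 'l::complete_residuated_lattice) \<Rightarrow> bool" where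
  "cond1 FS A B \<phi> = (sigma A \<le> vr (sigma B) (cv \<phi>))"
| "cond1 BS A B \<phi> = (tau A \<le> rv \<phi> (tau B))"
| "cond1 FB A B \<phi> = (sigma A \<le> vr (sigma B) (cv \<phi>) \<and> sigma B \<le> vr (sigma A) \<phi>)"
| "cond1 BB A B \<phi> = (tau A \<le> rv \<phi> (tau B) \<and> tau B \<le> rv (cv \<phi>) (tau A))"
| "cond1 FBB A B \<phi> = (sigma A \<le> vr (sigma B) (cv \<phi>) \<and> tau B \<le> rv (cv \<phi>) (tau A))"
| "cond1 BFB A B \<phi> = (sigma B \<le> vr (sigma A) \<phi> \<and> tau A \<le> rv \<phi> (tau B))"

fun cond2 :: "simtype \<Rightarrow> ('a,'x,'l) fa \<Rightarrow> ('b,'x,'l) fa \<Rightarrow> ('a \<Rightarrow> 'b \<Rightarrow> 'l::complete_residuated_lattice) \<Rightarrow> bool" where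
  "cond2 FS A B \<phi> = (\<forall>x. rc (cv \<phi>) (dx A x) \<le> rc (dx B x) (cv \<phi>))"
| "cond2 BS A B \<phi> = (\<forall>x. rc (dx A x) \<phi> \<le> rc \<phi> (dx B x))"
| "cond2 FB A B \<phi> = (\<forall>x. rc (cv \<phi>) (dx A x) \<le> rc (dx B x) (cv \<phi>) \<and> rc \<phi> (dx B x) \<le> rc (dx A x) \<phi>)"
| "cond2 BB A B \<phi> = (\<forall>x. rc (dx A x) \<phi> \<le> rc \<phi> (dx B x) \<and> rc (dx B x) (cv \<phi>) \<le> rc (cv \<phi>) (dx A x))"
| "cond2 FBB A B \<phi> = (\<forall>x. rc (cv \<phi>) (dx A x) = rc (dx B x) (cv \<phi>))"
| "cond2 BFB A B \<phi> = (\<forall>x. rc (dx A x) \<phi> = rc \<phi> (dx B x))"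

fun cond3 :: "simtype \<Rightarrow> ('a,'x,'l) fa \<Rightarrow> ('b,'x,'l) fa \<Rightarrow> ('a \<Rightarrow> 'b \<Rightarrow> 'l::complete_residuated_lattice) \<Rightarrow> bool" where
  "cond3 FS A B \<phi> = (rv (cv \<phi>) (tau A) \<le> tau B)"
| "cond3 BS A B \<phi> = (vr (sigma A) \<phi> \<le> sigma B)"
| "cond3 FB A B \<phi> = (rv (cv \<phi>) (tau A) \<le> tau B \<and> rv \<phi> (tau B) \<le> tau A)"
| "cond3 BB A B \<phi> = (vr (sigma A) \<phi> \<le> sigma B \<and> vr (sigma B) (cv \<phi>) \<le> sigma A)"
| "cond3 FBB A B \<phi> = (vr (sigma B) (cv \<phi>) \<le> sigma A \<and> rv (cv \<phi>) (tau A) \<le> tau B)"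
| "cond3 BFB A B \<phi> = (vr (sigma A) \<phi> \<le> sigma B \<and> rv \<phi> (tau B) \<le> tau A)"

fun psi :: "simtype \<Rightarrow> ('a,'x,'l) fa \<Rightarrow> ('b,'x,'l) fa \<Rightarrow> 'a \<Rightarrow> 'b \<Rightarrow> 'l::complete_residuated_lattice" where
  "psi FS A B = (\<lambda>a b. tau A a \<leadsto> tau B b)"
| "psi BS A B = (\<lambda>a b. sigma A a \<leadsto> sigma B b)"
| "psi FB A B = (\<lambda>a b. inf (tau A a \<leadsto> tau B b) (tau B b \<leadsto> tau A a))"
| "psi BB A B = (\<lambda>a b. inf (sigma A a \<leadsto> sigma B b) (sigma B b \<leadsto> sigma A a))"
| "psi FBB A B = (\<lambda>a b. inf (tau A a \<leadsto> tau B b) (sigma B b \<leadsto> sigma A a))"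
| "psi BFB A B = (\<lambda>a b. inf (sigma A a \<leadsto> sigma B b) (tau B b \<leadsto> tau A a))"

definition opF :: "('a,'x,'l) fa \<Rightarrow> ('b,'x,'l) fa \<Rightarrow> ('a \<Rightarrow> 'b \<Rightarrow> 'l::complete_residuated_lattice) \<Rightarrow> 'a \<Rightarrow> 'b \<Rightarrow> 'l" where
  "opF A B \<alpha> = (\<lambda>a b. INF x. INF a'. delta A a x a' \<leadsto> (SUP b'. delta B b x b' \<otimes> \<alpha> a' b'))"

definition opF' :: "('a,'x,'l) fa \<Rightarrow> ('b,'x,'l) fa \<Rightarrow> ('a \<Rightarrow> 'b \<Rightarrow> 'l::complete_residuated_lattice) \<Rightarrow> 'a \<Rightarrow> 'b \<Rightarrow> 'l" where
  "opF' A B \<alpha> = (\<lambda>a b. INF x. INF b'. delta B b x b' \<leadsto> (SUP a'. delta A a x a' \<otimes> \<alpha> a' b'))"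

definition opG :: "('a,'x,'l) fa \<Rightarrow> ('b,'x,'l) fa \<Rightarrow> ('a \<Rightarrow> 'b \<Rightarrow> 'l::complete_residuated_lattice) \<Rightarrow> 'a \<Rightarrow> 'b \<Rightarrow> 'l" where
  "opG A B \<alpha> = (\<lambda>a b. INF x. INF a'. delta A a' x a \<leadsto> (SUP b'. \<alpha> a' b' \<otimes> delta B b' x b))"

definition opG' :: "('a,'x,'l) fa \<Rightarrow> ('b,'x,'l) fa \<Rightarrow> ('a \<Rightarrow> 'b \<Rightarrow> 'l::complete_residuated_lattice) \<Rightarrow> 'a \<Rightarrow> 'b \<Rightarrow> 'l" where
  "opG' A B \<alpha> = (\<lambda>a b. INF x. INF b'. delta B b' x b \<leadsto> (SUP a'. delta A a' x a \<otimes> \<alpha> a' b'))"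

fun phi :: "simtype \<Rightarrow> ('a,'x,'l) fa \<Rightarrow> ('b,'x,'l) fa \<Rightarrow> ('a \<Rightarrow> 'b \<Rightarrow> 'l::complete_residuated_lattice) \<Rightarrow> 'a \<Rightarrow> 'b \<Rightarrow> 'l" where
  "phi FS A B \<alpha> = opF A B \<alpha>"
| "phi BS A B \<alpha> = opG A B \<alpha>"
| "phi FB A B \<alpha> = inf (opF A B \<alpha>) (opF' A B \<alpha>)"
| "phi BB A B \<alpha> = inf (opG A B \<alpha>) (opG' A B \<alpha>)"
| "phi FBB A B \<alpha> = inf (opF A B \<alpha>) (opG' A B \<alpha>)"
| "phi BFB A B \<alpha> = inf (opG A B \<alpha>) (opF' A B \<alpha>)"

text \<open>The sequence, 0-based internally: seq0 k = \<phi>_{k+1}.\<close>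

primrec seq0 :: "simtype \<Rightarrow> ('a,'x,'l) fa \<Rightarrow> ('b,'x,'l) fa \<Rightarrow> nat \<Rightarrow> 'a \<Rightarrow> 'b \<Rightarrow> 'l::complete_residuated_lattice" where
  "seq0 w A B 0 = psi w A B"
| "seq0 w A B (Suc k) = inf (seq0 w A B k) (phi w A B (seq0 w A B k))"

definition phis :: "simtype \<Rightarrow> ('a,'x,'l) fa \<Rightarrow> ('b,'x,'l) fa \<Rightarrow> nat \<Rightarrow> 'a \<Rightarrow> 'b \<Rightarrow> 'l::complete_residuated_lattice" where
  "phis w A B k = seq0 w A B (k - 1)"

definition gen_set :: "simtype \<Rightarrow> ('a,'x,'l) fa \<Rightarrow> ('b,'x,'l) fa \<Rightarrow> 'l::complete_residuated_lattice set" where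
  "gen_set w A B = {psi w A B a b | a b. True} \<union> {delta A a x a' | a x a'. True} \<union> {delta B b x b' | b x b'. True}"

end

theory Submission imports Defs begin

(* The proof has three independent ingredients.
   (1) Order theory: for a monotone map f on a lattice, the sequence
       s 0 = p, s (n+1) = s n \<sqinter> f (s n) is descending, lies above every
       post-fixed point of f below p, and a stable term s k = s (k+1) is itself
       a post-fixed point; a descending sequence with finitely many values
       stabilises, and there is a first index where it does.
   (2) Fuzzy-relation calculus: (w-2) says exactly that \<alpha> \<le> phi w \<alpha>, (w-3) says
       exactly that \<alpha> \<le> psi w, phi w is monotone, and (w-1) is upward closed.
   (3) Finiteness: all entries of the iterates lie in the subalgebra generated
       by the entries of psi w and of the transition relations, so under the
       finiteness hypothesis only finitely many relations occur.
   The theorem then follows by instantiating (1) with p = psi w and f = phi w. *)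

lemma meet_iteration_antitone:
  fixes s :: "nat \<Rightarrow> 'a::semilattice_inf"
  assumes s_Suc: "\<And>n. s (Suc n) = inf (s n) (f (s n))"
  shows "s (Suc n) \<le> s n"
  by (simp add: s_Suc)

lemma meet_iteration_above_postfixed:
  fixes s :: "nat \<Rightarrow> 'a::semilattice_inf"
  assumes s_0: "s 0 = p" and s_Suc: "\<And>n. s (Suc n) = inf (s n) (f (s n))"
    and "mono f" and "\<alpha> \<le> p" and post: "\<alpha> \<le> f \<alpha>"
  shows "\<alpha> \<le> s n"
proof (induction n)
  case 0 then show ?case using s_0 \<open>\<alpha> \<le> p\<close> by simp
next
  case (Suc n)
  have "\<alpha> \<le> f (s n)" using post monoD[OF \<open>mono f\<close> Suc.IH] by (rule order_trans)
  then show ?case using Suc.IH by (simp add: s_Suc)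
qed

lemma meet_iteration_stable_postfixed:
  fixes s :: "nat \<Rightarrow> 'a::semilattice_inf"
  assumes s_Suc: "\<And>n. s (Suc n) = inf (s n) (f (s n))" and "s k = s (Suc k)"
  shows "s k \<le> f (s k)"
  using assms by (metis inf.cobounded2)

lemma antitone_finite_range_first_stable:
  fixes s :: "nat \<Rightarrow> 'a::order"
  assumes fin: "finite (range s)" and desc: "\<And>n. s (Suc n) \<le> s n"
  obtains k where "s k = s (Suc k)" and "\<And>j. j < k \<Longrightarrow> s j \<noteq> s (Suc j)"
proof -
  have stabilises: "\<exists>n. s n = s (Suc n)"
  proof (rule ccontr)
    assume "\<nexists>n. s n = s (Suc n)"
    then have strict: "s (Suc n) < s n" for n using desc by (metis order_less_le)
    have "s j < s i" if "i < j" for i j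
    proof -
      have "s j \<le> s (Suc i)" using lift_Suc_antimono_le[of s] desc that by simp
      then show ?thesis using strict by (rule order_le_less_trans)
    qed
    then have "inj s"
      by (intro injI) (metis linorder_neq_iff order_less_irrefl)
    then show False using fin finite_imageD by blast
  qed
  define k where "k = (LEAST n. s n = s (Suc n))"
  show thesis
  proof (rule that)
    show "s k = s (Suc k)" unfolding k_def using stabilises by (rule LeastI_ex)
    show "s j \<noteq> s (Suc j)" if "j < k" for j
      using not_less_Least[of j "\<lambda>n. s n = s (Suc n)"] that unfolding k_def by blast
  qed
qed

context complete_residuated_lattice begin

lemma rmult_mono_left: "x \<le> y \<Longrightarrow> x \<otimes> z \<le> y \<otimes> z"
  by (meson order_trans order_refl residuation)

lemma rmult_mono_right: "x \<le> y \<Longrightarrow> z \<otimes> x \<le> z \<otimes> y"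
  by (metis rmult_mono_left rmult_commute)

lemma rimp_mono_right: "y \<le> z \<Longrightarrow> (x \<leadsto> y) \<le> (x \<leadsto> z)"
  by (meson order_trans order_refl residuation)

end

text \<open>By residuation, each inequality between compositions in (w-2) says that
\<alpha> is a post-fixed point of one of the operators F, G, F', G'.\<close>

lemma le_opF_iff: "\<alpha> \<le> opF A B \<alpha> \<longleftrightarrow> (\<forall>x. rc (cv \<alpha>) (dx A x) \<le> rc (dx B x) (cv \<alpha>))"
  unfolding opF_def rc_def cv_def dx_def le_fun_def
  by (simp add: SUP_le_iff le_INF_iff residuation[symmetric] rmult_commute) blast

lemma le_opG_iff: "\<alpha> \<le> opG A B \<alpha> \<longleftrightarrow> (\<forall>x. rc (dx A x) \<alpha> \<le> rc \<alpha> (dx B x))"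
  unfolding opG_def rc_def dx_def le_fun_def
  by (simp add: SUP_le_iff le_INF_iff residuation[symmetric] rmult_commute) blast

lemma le_opF'_iff: "\<alpha> \<le> opF' A B \<alpha> \<longleftrightarrow> (\<forall>x. rc \<alpha> (dx B x) \<le> rc (dx A x) \<alpha>)"
  unfolding opF'_def rc_def dx_def le_fun_def
  by (simp add: SUP_le_iff le_INF_iff residuation[symmetric] rmult_commute) blast

lemma le_opG'_iff: "\<alpha> \<le> opG' A B \<alpha> \<longleftrightarrow> (\<forall>x. rc (dx B x) (cv \<alpha>) \<le> rc (cv \<alpha>) (dx A x))"
  unfolding opG'_def rc_def cv_def dx_def le_fun_def
  by (simp add: SUP_le_iff le_INF_iff residuation[symmetric] rmult_commute) blast

text \<open>Condition (w-2) holds exactly for the post-fixed points of phi w; the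
equalities of types fbb and bfb split into the two opposite inequalities.\<close>

lemma cond2_iff_le_phi: "cond2 w A B \<alpha> \<longleftrightarrow> \<alpha> \<le> phi w A B \<alpha>"
  by (cases w)
     (auto simp: le_opF_iff le_opG_iff le_opF'_iff le_opG'_iff le_inf_iff
           intro: order.antisym)

text \<open>Composing with the initial/terminal vectors is residuated as well, so each
inequality in (w-3) bounds \<alpha> (or its converse) by an implication between those
vectors.\<close>

lemma rv_le_iff: "rv \<alpha> f \<le> g \<longleftrightarrow> (\<forall>a b. \<alpha> a b \<le> (f b \<leadsto> g a))"
  unfolding rv_def le_fun_def by (simp add: SUP_le_iff residuation[symmetric] rmult_commute)

lemma vr_le_iff: "vr f \<alpha> \<le> g \<longleftrightarrow> (\<forall>a b. \<alpha> a b \<le> (f a \<leadsto> g b))"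
  unfolding vr_def le_fun_def by (simp add: SUP_le_iff residuation[symmetric] rmult_commute) blast

lemma cond3_iff_le_psi: "cond3 w A B \<alpha> \<longleftrightarrow> \<alpha> \<le> psi w A B"
  by (cases w) (simp_all add: rv_le_iff vr_le_iff, auto simp: le_fun_def le_inf_iff cv_def)

text \<open>F, F', G, G' are monotone because composition and the residuum are
monotone in the argument that carries the relation.\<close>

lemma mono_opF: "mono (opF A B)"
  unfolding opF_def by (auto intro!: monoI le_funI INF_mono' rimp_mono_right SUP_mono'
      rmult_mono_right dest: le_funD)

lemma mono_opF': "mono (opF' A B)"
  unfolding opF'_def by (auto intro!: monoI le_funI INF_mono' rimp_mono_right SUP_mono'
      rmult_mono_right dest: le_funD)

lemma mono_opG: "mono (opG A B)"
  unfolding opG_def by (auto intro!: monoI le_funI INF_mono' rimp_mono_right SUP_mono'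
      rmult_mono_left dest: le_funD)

lemma mono_opG': "mono (opG' A B)"
  unfolding opG'_def by (auto intro!: monoI le_funI INF_mono' rimp_mono_right SUP_mono'
      rmult_mono_right dest: le_funD)

lemma mono_phi: "mono (phi w A B)"
  by (rule monoI, cases w; simp only: phi.simps; (rule inf_mono)?)
     (blast intro: monoD[OF mono_opF] monoD[OF mono_opF'] monoD[OF mono_opG] monoD[OF mono_opG'])+

lemma vr_rv_mono:
  assumes "\<alpha> \<le> \<beta>"
  shows "vr f \<alpha> \<le> vr f \<beta>" and "rv \<alpha> g \<le> rv \<beta> g"
  using assms unfolding vr_def rv_def le_fun_def
  by (auto intro!: SUP_mono' rmult_mono_left rmult_mono_right)

lemma cv_mono: "\<alpha> \<le> \<beta> \<Longrightarrow> cv \<alpha> \<le> cv \<beta>"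
  unfolding cv_def le_fun_def by auto

text \<open>Condition (w-1) only asks the relation to be large enough, so it is
inherited by larger relations; this gives part (d).\<close>

lemma cond1_upward_closed: "cond1 w A B \<alpha> \<Longrightarrow> \<alpha> \<le> \<beta> \<Longrightarrow> cond1 w A B \<beta>"
  by (cases w) (auto intro: order_trans vr_rv_mono cv_mono)

lemma subalg_gen_INF:
  "finite F \<Longrightarrow> (\<And>i. i \<in> F \<Longrightarrow> f i \<in> subalg_gen S) \<Longrightarrow> (INF i\<in>F. f i) \<in> subalg_gen S"
  by (induction F rule: finite_induct) (auto intro: subalg_gen.intros)

lemma subalg_gen_SUP:
  "finite F \<Longrightarrow> (\<And>i. i \<in> F \<Longrightarrow> f i \<in> subalg_gen S) \<Longrightarrow> (SUP i\<in>F. f i) \<in> subalg_gen S"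
  by (induction F rule: finite_induct) (auto intro: subalg_gen.intros)

text \<open>Over finite state sets and alphabet, phi w is built from the transition
degrees and its argument by finitary algebra operations, so it preserves
relations with entries in the generated subalgebra.\<close>

lemma phi_in_subalg_gen:
  fixes A :: "('a::finite, 'x::finite, 'l::complete_residuated_lattice) fa"
    and B :: "('b::finite, 'x, 'l) fa"
  assumes \<alpha>: "\<And>a b. \<alpha> a b \<in> subalg_gen (gen_set w A B)"
  shows "phi w A B \<alpha> a b \<in> subalg_gen (gen_set w A B)"
proof -
  let ?S = "subalg_gen (gen_set w A B)"
  have dA: "delta A a x a' \<in> ?S" for a x a' by (rule subalg_gen.base) (auto simp: gen_set_def)
  have dB: "delta B b x b' \<in> ?S" for b x b' by (rule subalg_gen.base) (unfold gen_set_def, blast)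
  note closure = subalg_gen_INF subalg_gen_SUP subalg_gen.imp subalg_gen.mult dA dB \<alpha>
  have "opF A B \<alpha> a b \<in> ?S" "opF' A B \<alpha> a b \<in> ?S" "opG A B \<alpha> a b \<in> ?S" "opG' A B \<alpha> a b \<in> ?S"
    unfolding opF_def opF'_def opG_def opG'_def by (auto intro!: closure)
  then show ?thesis by (cases w) (auto intro: subalg_gen.inf)
qed

lemma seq0_in_subalg_gen:
  fixes A :: "('a::finite, 'x::finite, 'l::complete_residuated_lattice) fa"
    and B :: "('b::finite, 'x, 'l) fa"
  shows "seq0 w A B k a b \<in> subalg_gen (gen_set w A B)"
proof (induction k arbitrary: a b)
  case 0 show ?case by (rule subalg_gen.base) (auto simp: gen_set_def)
next
  case (Suc k) then show ?case by (simp add: subalg_gen.inf phi_in_subalg_gen)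
qed

lemma finite_relations_into:
  fixes S :: "'l set"
  assumes "finite S"
  shows "finite {f :: 'a::finite \<Rightarrow> 'b::finite \<Rightarrow> 'l. \<forall>a b. f a b \<in> S}"
proof -
  have rows: "finite {g :: 'b \<Rightarrow> 'l. \<forall>b. g b \<in> S}"
    using finite_set_of_finite_funs[of "UNIV::'b set" S undefined] assms by simp
  show ?thesis
    using finite_set_of_finite_funs[OF finite_UNIV rows, of undefined] by simp
qed

lemma finite_range_seq0:
  fixes A :: "('a::finite, 'x::finite, 'l::complete_residuated_lattice) fa"
    and B :: "('b::finite, 'x, 'l) fa"
  assumes "finite (subalg_gen (gen_set w A B))"
  shows "finite (range (seq0 w A B))"
  by (rule finite_subset[OF _ finite_relations_into[OF assms]]) (auto intro: seq0_in_subalg_gen)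

lemma phis_Suc: "phis w A B (Suc k) = seq0 w A B k"
  by (simp add: phis_def)

lemma phis_image: "phis w A B ` {1..} = range (seq0 w A B)"
  by (force simp: phis_def image_iff Suc_le_eq intro!: bexI[of _ "Suc _"])

theorem theorem5p3:
  fixes w :: simtype
    and A :: "('a::finite, 'x::finite, 'l::complete_residuated_lattice) fa"
    and B :: "('b::finite, 'x, 'l) fa"
  assumes "finite (subalg_gen (gen_set w A B))"
  shows "finite (phis w A B ` {1..}) \<and> (\<forall>k\<ge>1. phis w A B (Suc k) \<le> phis w A B k) \<and>
    (\<exists>k\<ge>1. phis w A B k = phis w A B (Suc k) \<and>
       (\<forall>j. 1 \<le> j \<and> j < k \<longrightarrow> phis w A B j \<noteq> phis w A B (Suc j)) \<and>
       \<comment> \<open>(b)\<close>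
       cond2 w A B (phis w A B k) \<and> cond3 w A B (phis w A B k) \<and>
       (\<forall>\<alpha>. cond2 w A B \<alpha> \<and> cond3 w A B \<alpha> \<longrightarrow> \<alpha> \<le> phis w A B k) \<and>
       \<comment> \<open>(c)\<close>
       (cond1 w A B (phis w A B k) \<longrightarrow>
          (\<forall>\<alpha>. cond1 w A B \<alpha> \<and> cond2 w A B \<alpha> \<and> cond3 w A B \<alpha> \<longrightarrow> \<alpha> \<le> phis w A B k)) \<and>
       \<comment> \<open>(d)\<close>
       (\<not> cond1 w A B (phis w A B k) \<longrightarrow>
          \<not> (\<exists>\<alpha>. cond1 w A B \<alpha> \<and> cond2 w A B \<alpha> \<and> cond3 w A B \<alpha>)))"
proof -
  let ?s = "seq0 w A B"
  have s_Suc: "?s (Suc n) = inf (?s n) (phi w A B (?s n))" for n by simp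
  note desc = meet_iteration_antitone[of ?s, OF s_Suc]
  obtain k where stable: "?s k = ?s (Suc k)" and first: "\<And>j. j < k \<Longrightarrow> ?s j \<noteq> ?s (Suc j)"
    using antitone_finite_range_first_stable[OF finite_range_seq0[OF assms] desc] by blast
  have greatest: "\<alpha> \<le> ?s k" if "cond2 w A B \<alpha>" "cond3 w A B \<alpha>" for \<alpha>
    using meet_iteration_above_postfixed[of ?s, OF _ s_Suc mono_phi] that
    by (simp add: cond2_iff_le_phi cond3_iff_le_psi)
  have "cond2 w A B (?s k)"
    using meet_iteration_stable_postfixed[of ?s, OF s_Suc stable] by (simp add: cond2_iff_le_phi)
  moreover have "cond3 w A B (?s k)"
    using lift_Suc_antimono_le[of ?s 0 k] desc by (simp add: cond3_iff_le_psi)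
  moreover have "phis w A B j \<noteq> phis w A B (Suc j)" if "1 \<le> j" "j < Suc k" for j
    using first[of "j - 1"] that by (cases j) (simp_all add: phis_Suc del: seq0.simps)
  moreover have "phis w A B (Suc j) \<le> phis w A B j" if "1 \<le> j" for j
    using desc[of "j - 1"] that by (cases j) (simp_all add: phis_Suc del: seq0.simps)
  moreover have "\<not> (\<exists>\<alpha>. cond1 w A B \<alpha> \<and> cond2 w A B \<alpha> \<and> cond3 w A B \<alpha>)"
    if "\<not> cond1 w A B (?s k)"
    using that greatest cond1_upward_closed by blast
  ultimately show ?thesis
    unfolding phis_image using finite_range_seq0[OF assms] stable[symmetric] greatest
    by (intro conjI exI[of _ "Suc k"]) (auto simp: phis_Suc simp del: seq0.simps)
qed

end
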